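(* Let $\Sigma=\{0,1\}$ and $D=\Sigma(\Sigma\Sigma)^*\setminus\left(\Sigma^*11\Sigma^*\cup000\Sigma^*\cup101\Sigma^*\right)$. A map $f:\mathbb{Z}\to D$ is an increasing bijection from $(\mathbb{Z},<)$ to $(D,\prec)$ with $f(0)=0$ (the one-letter word) if and only if $f=\mathrm{rep}_{\mathcal{F}c}$.
   Context: Fibonacci numbers: $F_0=1$, $F_1=2$, $F_n=F_{n-1}+F_{n-2}$ for $n\ge2$. For a nonempty binary word $w=w_{k-1}\cdots w_0$ (digits indexed from the right), $\mathrm{val}_{\mathcal{F}c}(w)=\sum_{i=0}^{k-1}w_iF_i-w_{k-1}F_k$. $\mathrm{rep}_{\mathcal{F}c}(n)$ denotes the unique $w\in D$ with $\mathrm{val}_{\mathcal{F}c}(w)=n$ (this restriction of $\mathrm{val}_{\mathcal{F}c}$ to $D$ is a bijection onto $\mathbb Z$). Order: $u<_{rad}v$ iff $|u|<|v|$, or $|u|=|v|$ and $u<_{lex}v$; $u<_{rev}v$ iff $|u|>|v|$, or $|u|=|v|$ and $u<_{lex}v$. The total order $\prec$ on $\Sigma^*$: $u\prec v$ iff either $u\in1\Sigma^*$ and $v\in0\Sigma^*$; or $u,v\in0\Sigma^*$ and $u<_{rad}v$; or $u,v\in1\Sigma^*$ and $u<_{rev}v$. *)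

theory Defs
  imports Main
begin

text \<open>Words over the alphabet Sigma = {0,1} are lists of naturals with letters in {0,1};
  the list is written left to right, so a word w = w_(k-1) ... w_0 is the list
  [w_(k-1), ..., w_0], i.e. w_i = w ! (length w - 1 - i).\<close>

definition Sigma_words :: "nat list set" where
  "Sigma_words = {w. set w \<subseteq> {0, 1}}"

fun Fib :: "nat \<Rightarrow> int" where
  "Fib 0 = 1"
| "Fib (Suc 0) = 2"
| "Fib (Suc (Suc n)) = Fib (Suc n) + Fib n"

definition digit :: "nat list \<Rightarrow> nat \<Rightarrow> nat" where
  "digit w i = w ! (length w - 1 - i)"

definition val_Fc :: "nat list \<Rightarrow> int" where
  "val_Fc w = (\<Sum>i<length w. int (digit w i) * Fib i) - int (digit w (length w - 1)) * Fib (length w)"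

definition is_factor :: "nat list \<Rightarrow> nat list \<Rightarrow> bool" where
  "is_factor u w \<longleftrightarrow> (\<exists>p s. w = p @ u @ s)"

definition D :: "nat list set" where
  "D = {w \<in> Sigma_words. odd (length w) \<and> \<not> is_factor [1,1] w
          \<and> \<not> (\<exists>s. w = [0,0,0] @ s) \<and> \<not> (\<exists>s. w = [1,0,1] @ s)}"

definition rep_Fc :: "int \<Rightarrow> nat list" where
  "rep_Fc n = (THE w. w \<in> D \<and> val_Fc w = n)"

definition lex_less :: "nat list \<Rightarrow> nat list \<Rightarrow> bool" where
  "lex_less u v \<longleftrightarrow> (\<exists>p a b s t. u = p @ a # s \<and> v = p @ b # t \<and> a < b)
      \<or> (\<exists>s. s \<noteq> [] \<and> v = u @ s)"

definition rad_less :: "nat list \<Rightarrow> nat list \<Rightarrow> bool" where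
  "rad_less u v \<longleftrightarrow> length u < length v \<or> (length u = length v \<and> lex_less u v)"

definition rev_less :: "nat list \<Rightarrow> nat list \<Rightarrow> bool" where
  "rev_less u v \<longleftrightarrow> length u > length v \<or> (length u = length v \<and> lex_less u v)"

definition prec :: "nat list \<Rightarrow> nat list \<Rightarrow> bool" where
  "prec u v \<longleftrightarrow>
     (u \<noteq> [] \<and> hd u = 1 \<and> v \<noteq> [] \<and> hd v = 0)
   \<or> (u \<noteq> [] \<and> hd u = 0 \<and> v \<noteq> [] \<and> hd v = 0 \<and> rad_less u v)
   \<or> (u \<noteq> [] \<and> hd u = 1 \<and> v \<noteq> [] \<and> hd v = 1 \<and> rev_less u v)"

end

theory Submission
  imports Defs
begin

text \<open>On D the map val_Fc is an order isomorphism from (D, prec) onto (\<int>, <). Writing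
  the value of a word without its sign correction as a Zeckendorf sum (fib_val), a word 0t
  with t nonempty has value in [Fib (|t| - 2), Fib |t|) and a word 1t with t nonempty has value
  in [- Fib (|t| - 1), Fib (|t| - 2) - Fib (|t| - 1)). Since |t| is even, these intervals are
  disjoint and ordered exactly as prec orders the words: negative values first, by decreasing
  length, then nonnegative ones by increasing length, and lexicographically within a length.
  Filling each interval with Zeckendorf words gives surjectivity. An increasing bijection f
  from \<int> onto D then makes val_Fc \<circ> f an increasing bijection of \<int>, i.e. a translation,
  and f 0 = [0] makes it the identity.\<close>

lemma Fib_pos: "Fib n > 0"
  by (induction n rule: Fib.induct) auto

lemma Fib_less_Suc: "Fib n < Fib (Suc n)"
  by (induction n rule: Fib.induct) (auto simp: Fib_pos)

lemma Fib_mono: "m \<le> n \<Longrightarrow> Fib m \<le> Fib n"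
  by (induction n) (auto simp: le_Suc_eq intro: order_trans[OF _ less_imp_le[OF Fib_less_Suc]])

lemma of_nat_less_Fib: "int n < Fib n"
  by (induction n rule: Fib.induct) (auto simp: Fib_pos)

fun fib_val :: "nat list \<Rightarrow> int" where
  "fib_val [] = 0"
| "fib_val (a # w) = int a * Fib (length w) + fib_val w"

fun no11 :: "nat list \<Rightarrow> bool" where
  "no11 (a # b # w) \<longleftrightarrow> \<not> (a = 1 \<and> b = 1) \<and> no11 (b # w)"
| "no11 _ \<longleftrightarrow> True"

lemma no11_Cons_0 [simp]: "no11 (0 # w) \<longleftrightarrow> no11 w"
  by (cases w) auto

lemma no11_ConsD: "no11 (a # w) \<Longrightarrow> no11 w"
  by (cases w) auto

lemma sum_digit_Fib_eq_fib_val: "(\<Sum>i<length w. int (digit w i) * Fib i) = fib_val w"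
proof (induction w)
  case (Cons a w)
  have "(\<Sum>i<length w. int (digit (a # w) i) * Fib i) = (\<Sum>i<length w. int (digit w i) * Fib i)"
  proof (intro sum.cong refl)
    fix i assume "i \<in> {..<length w}"
    then have "length w - i = Suc (length w - 1 - i)" by auto
    then show "int (digit (a # w) i) * Fib i = int (digit w i) * Fib i"
      by (simp add: digit_def)
  qed
  then show ?case
    using Cons by (simp add: digit_def)
qed simp

lemma val_Fc_eq_fib_val: "w \<noteq> [] \<Longrightarrow> val_Fc w = fib_val w - int (hd w) * Fib (length w)"
  unfolding val_Fc_def sum_digit_Fib_eq_fib_val by (cases w) (simp_all add: digit_def)

lemma fib_val_bounds:
  "set w \<subseteq> {0, 1} \<Longrightarrow> no11 w \<Longrightarrow> 0 \<le> fib_val w \<and> fib_val w < Fib (length w)"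
proof (induction w rule: induct_list012)
  case (3 a b w)
  consider "a = 0" | "a = 1" "b = 0" using "3.prems" by auto
  then show ?case
  proof cases
    case 1
    then show ?thesis using 3 Fib_less_Suc[of "Suc (length w)"] by (simp add: no11_ConsD)
  next
    case 2
    have "no11 w" using "3.prems"(2) by (auto dest: no11_ConsD)
    then show ?thesis using 2 3 Fib_pos[of "Suc (length w)"] by simp
  qed
qed auto

lemma fib_val_surj:
  "0 \<le> n \<Longrightarrow> n < Fib k \<Longrightarrow> \<exists>w. length w = k \<and> set w \<subseteq> {0, 1} \<and> no11 w \<and> fib_val w = n"
proof (induction k arbitrary: n rule: Fib.induct)
  case 1
  then show ?case by simp
next
  case 2
  then have "n = 0 \<or> n = 1" by auto
  then show ?case
    by (intro exI[of _ "[nat n]"]) auto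
next
  case (3 k)
  show ?case
  proof (cases "n < Fib (Suc k)")
    case True
    then obtain w where "length w = Suc k \<and> set w \<subseteq> {0, 1} \<and> no11 w \<and> fib_val w = n"
      using "3.IH"(1) "3.prems" by blast
    then show ?thesis by (intro exI[of _ "0 # w"]) auto
  next
    case False
    then obtain w where "length w = k \<and> set w \<subseteq> {0, 1} \<and> no11 w \<and> fib_val w = n - Fib (Suc k)"
      using "3.IH"(2) "3.prems" by fastforce
    then show ?thesis by (intro exI[of _ "1 # 0 # w"]) auto
  qed
qed

lemma not_lex_less_Nil [simp]: "\<not> lex_less u []"
  by (auto simp: lex_less_def)

lemma lex_less_Cons [simp]: "lex_less (a # u) (b # v) \<longleftrightarrow> a < b \<or> (a = b \<and> lex_less u v)"
proof
  assume "lex_less (a # u) (b # v)"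
  then show "a < b \<or> (a = b \<and> lex_less u v)"
    unfolding lex_less_def by (auto simp: Cons_eq_append_conv)
next
  assume "a < b \<or> (a = b \<and> lex_less u v)"
  then show "lex_less (a # u) (b # v)"
    unfolding lex_less_def by (metis append_Cons append_Nil)
qed

lemma lex_less_total: "length u = length v \<Longrightarrow> u \<noteq> v \<Longrightarrow> lex_less u v \<or> lex_less v u"
proof (induction u arbitrary: v)
  case (Cons a u)
  then obtain b v' where "v = b # v'" by (cases v) auto
  then show ?case using Cons by (cases "a = b") (auto simp: neq_iff)
qed simp

lemma lex_less_imp_fib_val_less:
  assumes "length u = length v" "set u \<subseteq> {0, 1}" "set v \<subseteq> {0, 1}" "no11 u" "no11 v"
    and "lex_less u v"
  shows "fib_val u < fib_val v"
  using assms
proof (induction u arbitrary: v)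
  case (Cons a u)
  then obtain b v' where v: "v = b # v'" by (cases v) auto
  have no11_tails: "no11 u" "no11 v'"
    using Cons.prems v by (auto dest: no11_ConsD)
  show ?case
  proof (cases "a < b")
    case True
    then have "a = 0" "b = 1" using Cons.prems v by auto
    then show ?thesis
      using v Cons.prems no11_tails fib_val_bounds[of u] fib_val_bounds[of v'] by simp
  next
    case False
    then show ?thesis using Cons v no11_tails by auto
  qed
qed simp

lemma is_factor_Cons: "is_factor u (a # w) \<longleftrightarrow> (\<exists>s. a # w = u @ s) \<or> is_factor u w"
  unfolding is_factor_def by (auto simp: Cons_eq_append_conv)

lemma not_is_factor_11_iff_no11: "\<not> is_factor [1, 1] w \<longleftrightarrow> no11 w"
  by (induction w rule: no11.induct) (auto simp: is_factor_Cons, auto simp: is_factor_def Cons_eq_append_conv)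

lemma mem_D_iff:
  "w \<in> D \<longleftrightarrow> set w \<subseteq> {0, 1} \<and> no11 w \<and> odd (length w)
     \<and> \<not> (\<exists>s. w = 0 # 0 # 0 # s) \<and> \<not> (\<exists>s. w = 1 # 0 # 1 # s)"
  unfolding D_def Sigma_words_def not_is_factor_11_iff_no11[symmetric] by auto

lemma D_Cons_0_bounds:
  assumes "0 # t \<in> D"
  shows "0 \<le> val_Fc (0 # t) \<and> val_Fc (0 # t) < Fib (length t)
    \<and> (t \<noteq> [] \<longrightarrow> Fib (length t - 2) \<le> val_Fc (0 # t))"
proof -
  have t: "set t \<subseteq> {0, 1}" "no11 t" "even (length t)"
    using assms by (simp_all add: mem_D_iff)
  have val: "val_Fc (0 # t) = fib_val t"
    by (simp add: val_Fc_eq_fib_val)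
  have "Fib (length t - 2) \<le> fib_val t" if "t \<noteq> []"
  proof -
    obtain a b s where abs: "t = a # b # s"
      using t(3) \<open>t \<noteq> []\<close> by (cases t rule: remdups_adj.cases) auto
    have "a = 1 \<or> b = 1" "\<not> (a = 1 \<and> b = 1)"
      using assms t abs by (auto simp: mem_D_iff)
    moreover have "0 \<le> fib_val s"
      using fib_val_bounds[of s] t abs by (auto dest: no11_ConsD)
    ultimately show ?thesis
      using abs t(1) Fib_pos[of "length s"] Fib_less_Suc[of "length s"] by auto
  qed
  then show ?thesis
    using val fib_val_bounds[OF t(1,2)] by simp
qed

lemma D_Cons_1_bounds:
  assumes "1 # t \<in> D"
  shows "t = [] \<or> - Fib (length t - 1) \<le> val_Fc (1 # t)
    \<and> val_Fc (1 # t) < Fib (length t - 2) - Fib (length t - 1)"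
proof (cases t)
  case (Cons a t')
  then obtain b s where abs: "t = a # b # s"
    using assms by (cases t') (auto simp: mem_D_iff)
  then have "a = 0" "b = 0" "set s \<subseteq> {0, 1}" "no11 s"
    using assms by (auto simp: mem_D_iff)
  then have "val_Fc (1 # t) = fib_val s - Fib (Suc (length s))"
    using abs by (simp add: val_Fc_eq_fib_val)
  then show ?thesis
    using abs fib_val_bounds[OF \<open>set s \<subseteq> {0, 1}\<close> \<open>no11 s\<close>] by simp
qed simp

lemma D_ConsE:
  assumes "w \<in> D"
  obtains a t where "w = a # t" "a = 0 \<or> a = 1"
  using assms by (cases w) (auto simp: mem_D_iff)

lemma val_Fc_singleton [simp]: "val_Fc [a] = - int a"
  by (simp add: val_Fc_def digit_def)

lemma lex_less_imp_val_Fc_less: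
  assumes "u \<in> D" "v \<in> D" "hd u = hd v" "length u = length v" "lex_less u v"
  shows "val_Fc u < val_Fc v"
proof -
  have "fib_val u < fib_val v"
    using assms by (intro lex_less_imp_fib_val_less) (auto simp: mem_D_iff)
  moreover have "u \<noteq> []" "v \<noteq> []"
    using assms(1,2) by (auto elim: D_ConsE)
  ultimately show ?thesis
    using assms(3,4) by (simp add: val_Fc_eq_fib_val)
qed

lemma val_Fc_Cons_1_neg:
  assumes "1 # t \<in> D"
  shows "val_Fc (1 # t) < 0"
proof -
  have "Fib (length t - 2) \<le> Fib (length t - 1)" by (rule Fib_mono) simp
  then show ?thesis
    using D_Cons_1_bounds[OF assms] by auto
qed

lemma val_Fc_Cons_0_less_longer:
  assumes "0 # t \<in> D" "0 # t' \<in> D" "length t < length t'"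
  shows "val_Fc (0 # t) < val_Fc (0 # t')"
proof -
  have "even (length t)" "even (length t')"
    using assms(1,2) by (simp_all add: mem_D_iff)
  then have "length t + 2 \<le> length t'"
    using assms(3) by presburger
  then have "Fib (length t) \<le> Fib (length t' - 2)" by (intro Fib_mono) simp
  moreover have "t' \<noteq> []" using assms(3) by auto
  ultimately show ?thesis
    using D_Cons_0_bounds[OF assms(1)] D_Cons_0_bounds[OF assms(2)] by auto
qed

lemma val_Fc_Cons_1_less_shorter:
  assumes "1 # t \<in> D" "1 # t' \<in> D" "length t' < length t"
  shows "val_Fc (1 # t) < val_Fc (1 # t')"
proof -
  have "even (length t)" "even (length t')"
    using assms(1,2) by (simp_all add: mem_D_iff)
  then have gap: "length t' + 2 \<le> length t"
    using assms(3) by presburger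
  then obtain k where k: "length t = k + 2" by (metis add.commute le_add2 le_add_diff_inverse order_trans)
  have upper: "val_Fc (1 # t) < Fib k - Fib (Suc k)"
    using D_Cons_1_bounds[OF assms(1)] k by auto
  show ?thesis
  proof (cases "t' = []")
    case True
    then show ?thesis using upper Fib_less_Suc[of k] by simp
  next
    case False
    then have "- Fib (length t' - 1) \<le> val_Fc (1 # t')"
      using D_Cons_1_bounds[OF assms(2)] by auto
    moreover have "Fib (length t' - 1) \<le> Fib (Suc k) - Fib k"
      using gap k by (cases k) (auto intro: Fib_mono)
    ultimately show ?thesis using upper by linarith
  qed
qed

lemma prec_imp_val_Fc_less:
  assumes u: "u \<in> D" and v: "v \<in> D" and "prec u v"
  shows "val_Fc u < val_Fc v"
proof -
  obtain a t b t' where ut: "u = a # t" and vt: "v = b # t'"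
    using u v by (metis D_ConsE)
  consider "a = 1" "b = 0"
    | "a = b" "length t = length t'" "lex_less u v"
    | "a = 0" "b = 0" "length t < length t'"
    | "a = 1" "b = 1" "length t' < length t"
    using \<open>prec u v\<close> ut vt unfolding prec_def rad_less_def rev_less_def by auto
  then show ?thesis
  proof cases
    case 1
    then show ?thesis
      using val_Fc_Cons_1_neg D_Cons_0_bounds u v ut vt by fastforce
  next
    case 2
    then show ?thesis using lex_less_imp_val_Fc_less u v ut vt by simp
  qed (use val_Fc_Cons_0_less_longer val_Fc_Cons_1_less_shorter u v ut vt in simp_all)
qed

lemma prec_total_on_D:
  assumes "u \<in> D" "v \<in> D" "u \<noteq> v"
  shows "prec u v \<or> prec v u"
proof -
  obtain a t b t' where "u = a # t" "a = 0 \<or> a = 1" "v = b # t'" "b = 0 \<or> b = 1"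
    using assms(1,2) by (metis D_ConsE)
  then show ?thesis
    using lex_less_total[OF _ assms(3)] unfolding prec_def rad_less_def rev_less_def
    by (cases "length t" "length t'" rule: linorder_cases) auto
qed

lemma exists_D_val_Fc_pos: "0 < N \<Longrightarrow> N < Fib (2 * j) \<Longrightarrow> \<exists>w\<in>D. val_Fc w = N"
proof (induction j arbitrary: N)
  case (Suc j)
  show ?case
  proof (cases "N < Fib (2 * j)")
    case True
    then show ?thesis using Suc by blast
  next
    case False
    obtain t where t: "length t = Suc (Suc (2 * j))" "set t \<subseteq> {0, 1}" "no11 t" "fib_val t = N"
      using fib_val_surj[of N "Suc (Suc (2 * j))"] Suc.prems by auto
    then obtain a b s where abs: "t = a # b # s" by (auto simp: length_Suc_conv)
    have "fib_val s < Fib (length s)"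
      using fib_val_bounds[of s] t abs by (auto dest: no11_ConsD)
    then have "\<not> (a = 0 \<and> b = 0)" using False t abs by auto
    then have "0 # t \<in> D" using t abs by (auto simp: mem_D_iff)
    moreover have "val_Fc (0 # t) = N" using t by (simp add: val_Fc_eq_fib_val)
    ultimately show ?thesis by blast
  qed
qed simp

lemma exists_D_val_Fc_neg: "1 \<le> N \<Longrightarrow> N \<le> Fib (2 * j + 1) \<Longrightarrow> \<exists>w\<in>D. val_Fc w = - N"
proof (induction j arbitrary: N)
  case 0
  then have "N = 1 \<or> N = 2" by simp linarith
  moreover have "[1] \<in> D" "[1, 0, 0] \<in> D" by (simp_all add: mem_D_iff)
  moreover have "val_Fc [1, 0, 0] = -2" by (simp add: val_Fc_eq_fib_val eval_nat_numeral)
  ultimately show ?case by force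
next
  case (Suc j)
  show ?case
  proof (cases "N \<le> Fib (2 * j + 1)")
    case True
    then show ?thesis using Suc by blast
  next
    case False
    have "Fib (2 * Suc j + 1) = Fib (Suc (Suc (2 * j))) + Fib (2 * j + 1)" by simp
    then have "0 \<le> Fib (2 * Suc j + 1) - N" "Fib (2 * Suc j + 1) - N < Fib (Suc (Suc (2 * j)))"
      using Suc.prems False by linarith+
    then obtain s where s: "length s = Suc (Suc (2 * j))" "set s \<subseteq> {0, 1}" "no11 s"
        "fib_val s = Fib (2 * Suc j + 1) - N"
      using fib_val_surj by blast
    then have "1 # 0 # 0 # s \<in> D" by (simp add: mem_D_iff)
    moreover have "val_Fc (1 # 0 # 0 # s) = - N" using s by (simp add: val_Fc_eq_fib_val)
    ultimately show ?thesis by blast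
  qed
qed

lemma val_Fc_onto_D: "\<exists>w\<in>D. val_Fc w = n"
proof -
  consider "n = 0" | "n > 0" | "n < 0" by linarith
  then show ?thesis
  proof cases
    case 1
    have "[0] \<in> D" by (simp add: mem_D_iff)
    then show ?thesis using 1 by force
  next
    case 2
    have "n < Fib (2 * nat n)"
      using 2 of_nat_less_Fib[of "2 * nat n"] by simp
    then show ?thesis
      using 2 by (rule exists_D_val_Fc_pos[rotated])
  next
    case 3
    have "- n \<le> Fib (2 * nat (- n) + 1)"
      using 3 of_nat_less_Fib[of "2 * nat (- n) + 1"] by linarith
    then show ?thesis
      using 3 exists_D_val_Fc_neg[of "- n"] by auto
  qed
qed

lemma val_Fc_image_D: "val_Fc ` D = UNIV"
  using val_Fc_onto_D by (metis UNIV_eq_I image_iff)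

lemma inj_on_val_Fc_D: "inj_on val_Fc D"
proof (rule inj_onI, rule ccontr)
  fix u v assume "u \<in> D" "v \<in> D" "val_Fc u = val_Fc v" "u \<noteq> v"
  then show False
    using prec_total_on_D[of u v] prec_imp_val_Fc_less[of u v] prec_imp_val_Fc_less[of v u] by auto
qed

lemma rep_Fc_in_D: "rep_Fc n \<in> D"
  and val_Fc_rep_Fc [simp]: "val_Fc (rep_Fc n) = n"
proof -
  have "\<exists>!w. w \<in> D \<and> val_Fc w = n"
    using val_Fc_onto_D inj_on_val_Fc_D by (auto dest: inj_onD)
  then have "rep_Fc n \<in> D \<and> val_Fc (rep_Fc n) = n"
    unfolding rep_Fc_def by (rule theI')
  then show "rep_Fc n \<in> D" "val_Fc (rep_Fc n) = n" by simp_all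
qed

lemma rep_Fc_val_Fc: "w \<in> D \<Longrightarrow> rep_Fc (val_Fc w) = w"
  using inj_onD[OF inj_on_val_Fc_D _ rep_Fc_in_D] by simp

lemma bij_betw_rep_Fc: "bij_betw rep_Fc UNIV D"
  by (rule bij_betw_byWitness[where f' = val_Fc]) (auto simp: rep_Fc_val_Fc rep_Fc_in_D)

lemma prec_rep_Fc:
  assumes "x < y"
  shows "prec (rep_Fc x) (rep_Fc y)"
proof -
  have "\<not> prec (rep_Fc y) (rep_Fc x)"
    using assms prec_imp_val_Fc_less[OF rep_Fc_in_D rep_Fc_in_D, of y x] by auto
  moreover have "rep_Fc x \<noteq> rep_Fc y"
    using assms val_Fc_rep_Fc[of x] val_Fc_rep_Fc[of y] by fastforce
  ultimately show ?thesis
    using prec_total_on_D rep_Fc_in_D by blast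
qed

lemma strict_mono_surj_int_shift:
  fixes \<phi> :: "int \<Rightarrow> int"
  assumes "strict_mono \<phi>" "surj \<phi>"
  shows "\<phi> n = \<phi> 0 + n"
proof -
  have step: "\<phi> (k + 1) = \<phi> k + 1" for k
  proof (rule ccontr)
    assume "\<phi> (k + 1) \<noteq> \<phi> k + 1"
    moreover have "\<phi> k < \<phi> (k + 1)" using assms(1) by (simp add: strict_mono_less)
    moreover obtain m where "\<phi> m = \<phi> k + 1" using assms(2) by (metis surjD)
    ultimately have "\<phi> k < \<phi> m" "\<phi> m < \<phi> (k + 1)" by auto
    then have "k < m" "m < k + 1" using assms(1) by (simp_all add: strict_mono_less)
    then show False by linarith
  qed
  show ?thesis
  proof (induction n rule: int_induct[where k = 0])
    case (step2 i)
    then show ?case using step[of "i - 1"] by simp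
  qed (simp_all add: step)
qed

theorem mainTheorem3:
  fixes f :: "int \<Rightarrow> nat list"
  shows "(bij_betw f UNIV D \<and> (\<forall>x y. x < y \<longrightarrow> prec (f x) (f y)) \<and> f 0 = [0])
         \<longleftrightarrow> f = rep_Fc"
proof
  assume f: "bij_betw f UNIV D \<and> (\<forall>x y. x < y \<longrightarrow> prec (f x) (f y)) \<and> f 0 = [0]"
  then have f_D: "f x \<in> D" for x by (meson bij_betwE UNIV_I)
  have "strict_mono (val_Fc \<circ> f)"
    using f f_D prec_imp_val_Fc_less by (simp add: strict_mono_def)
  moreover have "surj (val_Fc \<circ> f)"
    using f val_Fc_image_D by (simp add: bij_betw_def image_comp[symmetric, unfolded comp_def])
  ultimately have "val_Fc (f n) = n" for n
    using strict_mono_surj_int_shift[of "val_Fc \<circ> f" n] f by simp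
  then show "f = rep_Fc"
    using f_D rep_Fc_val_Fc by (intro ext) metis
next
  assume "f = rep_Fc"
  moreover have "rep_Fc 0 = [0]"
    using rep_Fc_val_Fc[of "[0]"] by (simp add: mem_D_iff)
  ultimately show "bij_betw f UNIV D \<and> (\<forall>x y. x < y \<longrightarrow> prec (f x) (f y)) \<and> f 0 = [0]"
    using bij_betw_rep_Fc prec_rep_Fc by blast
qed

end
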